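(* Let $R,\mu$ be positive integers with $\mu<R$, $D=\gcd(R,\mu)$, and assume (as holds in each case below) that $D\ge2$ is prime and that under $G_{R,\mu}$ the ring $\mathbb Z_R$ has exactly two orbits $\{\lambda:\lambda\equiv0\pmod D\}$ and its complement. Then (with $t$ an integer): (i) If $R=3t\ge6$, $\mu=3$ ($D=3$): $\mathrm P^+_{R,3}(0)=\frac13\left(\binom{R-1}{2}-1\right)+1$, $\mathrm P^+_{R,3}(1)=\frac13\left(\binom{R-1}{2}-1\right)$. (ii) If $R=4t+2\ge6$, $\mu=4$ ($D=2$): $\mathrm P^+_{R,4}(0)=\frac14\left(\binom{R-1}{3}+\frac{R-2}{2}\right)$, $\mathrm P^+_{R,4}(1)=\frac14\left(\binom{R-1}{3}-\frac{R-2}{2}\right)$. (iii) If $R=5t\ge10$, $\mu=5$ ($D=5$): $\mathrm P^+_{R,5}(0)=\frac15\left(\binom{R-1}{4}-1\right)+1$, $\mathrm P^+_{R,5}(1)=\frac15\left(\binom{R-1}{4}-1\right)$. (iv) If $\mu=6$ and either $R\equiv2\pmod6$, $R\ge8$, or $R\equiv4\pmod6$, $R\ge10$ ($D=2$): $\mathrm P^+_{R,6}(0)=\frac16\left(\binom{R-1}{5}-\binom{R/2-1}{2}\right)$, $\mathrm P^+_{R,6}(1)=\frac16\left(\binom{R-1}{5}+\binom{R/2-1}{2}\right)$. (v) If $R=6t+3\ge9$, $\mu=6$ ($D=3$): $\mathrm P^+_{R,6}(0)=\frac13\left(\frac12\binom{R-1}{5}+\frac{R-3}{3}\right)$, $\mathrm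 P^+_{R,6}(1)=\frac16\left(\binom{R-1}{5}-\frac{R-3}{3}\right)$. (vi) If $R=7t\ge14$, $\mu=7$ ($D=7$): $\mathrm P^+_{R,7}(0)=\frac17\left(\binom{R-1}{6}-1\right)+1$, $\mathrm P^+_{R,7}(1)=\frac17\left(\binom{R-1}{6}-1\right)$. (vii) If $R=4t+6\ge10$, $\mu=8$ ($D=2$): $\mathrm P^+_{R,8}(0)=\frac18\left(\binom{R-1}{7}+\binom{R/2-1}{3}\right)$, $\mathrm P^+_{R,8}(1)=\frac18\left(\binom{R-1}{7}-\binom{R/2-1}{3}\right)$. (viii) If $\mu=9$ and either $R=9t+3\ge12$ or $R=9t+6\ge15$ ($D=3$): $\mathrm P^+_{R,9}(0)=\frac19\left(\binom{R-1}{8}+2\binom{R/3-1}{2}\right)$, $\mathrm P^+_{R,9}(1)=\frac19\left(\binom{R-1}{8}-\binom{R/3-1}{2}\right)$. Moreover, in every case $\mathrm P^+_{R,\mu}(\lambda)=\mathrm P^+_{R,\mu}(0)$ when $\lambda\equiv0\pmod D$ and $\mathrm P^+_{R,\mu}(\lambda)=\mathrm P^+_{R,\mu}(1)$ otherwise.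
   Context: $\mathbb Z_R$ is the ring of integers modulo $R$ and $\mathbb Z_R^*$ its units; $\mathrm P^+_{R,\mu}(\lambda)$ is the number of $\mu$-element subsets of $\mathbb Z_R$ (distinct elements) whose sum in $\mathbb Z_R$ is $\lambda$. $G_{R,\mu}$ is the group of maps $\lambda\mapsto\lambda\ell+u\mu$ on $\mathbb Z_R$ with $\ell\in\mathbb Z_R^*$, $u\in\{0,\dots,R-1\}$; orbits are the equivalence classes of "$\lambda_2=\lambda_1\varphi$ for some $\varphi\in G_{R,\mu}$". *)

theory Defs
  imports Complex_Main "HOL-Computational_Algebra.Primes"
begin

text \<open>Z_R is modelled as {0..<R} (nat) with arithmetic mod R.\<close>

definition Pplus :: "nat \<Rightarrow> nat \<Rightarrow> nat \<Rightarrow> nat" where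
  "Pplus R m x = card {S. S \<subseteq> {0..<R} \<and> card S = m \<and> (\<Sum>S) mod R = x mod R}"

definition Gmap :: "nat \<Rightarrow> nat \<Rightarrow> nat \<Rightarrow> nat \<Rightarrow> nat \<Rightarrow> nat" where
  "Gmap R m l u x = (x * l + u * m) mod R"

definition Ggroup :: "nat \<Rightarrow> nat \<Rightarrow> (nat \<Rightarrow> nat) set" where
  "Ggroup R m = {Gmap R m l u | l u. l < R \<and> coprime l R \<and> u < R}"

definition Gorbit :: "nat \<Rightarrow> nat \<Rightarrow> nat \<Rightarrow> nat set" where
  "Gorbit R m x = {\<phi> x | \<phi>. \<phi> \<in> Ggroup R m}"

definition Gorbits :: "nat \<Rightarrow> nat \<Rightarrow> nat set set" where
  "Gorbits R m = Gorbit R m ` {0..<R}"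

end

theory Submission
  imports Defs "HOL-Number_Theory.Residues"
begin

text \<open>
  Let \<open>p = gcd R \<mu>\<close> be prime and write \<open>R = p m\<close>, \<open>\<mu> = p k\<close>. Translating a \<open>\<mu>\<close>-subset of
  \<open>\<int>\<^sub>R\<close> by \<open>t\<close> adds \<open>\<mu> t\<close> to its sum, so by Bezout \<open>P\<^sup>+(\<lambda>)\<close> only depends on \<open>\<lambda> mod p\<close>.
  Cut \<open>{0..<p m}\<close> into the \<open>m\<close> blocks \<open>{p j..<p j + p}\<close>. A \<open>\<mu>\<close>-subset that is not a union of
  blocks meets a first block in \<open>k' \<notin> {0, p}\<close> points; rotating that block by \<open>c\<close> with
  \<open>c k' \<equiv> 1 (mod p)\<close> raises the sum by 1 modulo \<open>p\<close> and can be undone, so these subsets are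
  equidistributed over the residues modulo \<open>p\<close>. The \<open>m choose k\<close> unions of \<open>k\<close> blocks all have
  sum \<open>\<equiv> e = k p (p - 1) / 2 (mod p)\<close>. Counting all subsets then gives
  \<open>R P\<^sup>+(\<lambda>) + (m choose k) = (R choose \<mu>) + [\<lambda> \<equiv> e (mod p)] p (m choose k)\<close>.
\<close>

section \<open>Rotating one block\<close>

definition block_rotate :: "nat \<Rightarrow> nat \<Rightarrow> nat \<Rightarrow> nat \<Rightarrow> nat" where
  "block_rotate p j c x = (if x div p = j then p * j + (x mod p + c) mod p else x)"

lemma block_rotate_div [simp]: "0 < p \<Longrightarrow> block_rotate p j c x div p = x div p"
  by (simp add: block_rotate_def)

lemma block_rotate_mod:
  "0 < p \<Longrightarrow> block_rotate p j c x mod p = (if x div p = j then (x mod p + c) mod p else x mod p)"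
  by (simp add: block_rotate_def)

lemma inj_block_rotate:
  assumes "0 < p"
  shows "inj (block_rotate p j c)"
proof (rule injI)
  fix x y
  assume eq: "block_rotate p j c x = block_rotate p j c y"
  then have div_eq: "x div p = y div p"
    by (metis block_rotate_div[OF assms])
  have "x mod p = y mod p"
  proof (cases "x div p = j")
    case True
    then have "[x mod p + c = y mod p + c] (mod p)"
      using eq div_eq by (simp add: block_rotate_def cong_def)
    then have "[x mod p = y mod p] (mod p)"
      by (simp only: cong_add_rcancel_nat)
    then show ?thesis
      by (simp add: cong_def)
  next
    case False
    then show ?thesis
      using eq div_eq by (simp add: block_rotate_def)
  qed
  with div_eq show "x = y"
    by (metis div_mult_mod_eq)
qed

lemma block_rotate_less: "0 < p \<Longrightarrow> x < p * m \<Longrightarrow> block_rotate p j c x < p * m"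
  by (metis block_rotate_div div_less_iff_less_mult mult.commute)

definition block_count :: "nat \<Rightarrow> nat set \<Rightarrow> nat \<Rightarrow> nat" where
  "block_count p S j = card {x \<in> S. x div p = j}"

lemma block_count_image_block_rotate [simp]:
  assumes "0 < p"
  shows "block_count p (block_rotate p j c ` S) = block_count p S"
proof
  fix i
  have "{x \<in> block_rotate p j c ` S. x div p = i} = block_rotate p j c ` {x \<in> S. x div p = i}"
    using assms by auto
  then show "block_count p (block_rotate p j c ` S) i = block_count p S i"
    unfolding block_count_def
    by (simp add: card_image inj_on_subset[OF inj_block_rotate[OF assms]])
qed

lemma sum_block_rotate_mod:
  assumes "0 < p" "finite S"
  shows "\<Sum>(block_rotate p j c ` S) mod p = (\<Sum>S + c * block_count p S j) mod p"
proof -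
  have "[\<Sum>x\<in>S. block_rotate p j c x = \<Sum>x\<in>S. x + (if x div p = j then c else 0)] (mod p)"
    by (rule cong_sum) (simp add: cong_def block_rotate_mod[OF assms(1)] mod_add_left_eq)
  moreover have "(\<Sum>x\<in>S. x + (if x div p = j then c else 0)) = \<Sum>S + c * block_count p S j"
    using assms(2) by (simp add: sum.distrib sum.If_cases block_count_def Int_def)
  moreover have "\<Sum>(block_rotate p j c ` S) = (\<Sum>x\<in>S. block_rotate p j c x)"
    by (simp add: sum.reindex inj_on_subset[OF inj_block_rotate[OF assms(1)]])
  ultimately show ?thesis
    by (simp add: cong_def)
qed

section \<open>Subsets meeting a block partially\<close>

definition partial_block :: "nat \<Rightarrow> nat set \<Rightarrow> nat \<Rightarrow> bool" where
  "partial_block p S j \<longleftrightarrow> 0 < block_count p S j \<and> block_count p S j < p"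

text \<open>The block and the amount \<open>k' ^ (p - 2)\<close> (the inverse of \<open>k'\<close> modulo \<open>p\<close>, by Fermat) depend
  only on the block counts, which the rotation preserves; this makes the map injective.\<close>

definition rotate_first_partial_block :: "nat \<Rightarrow> nat set \<Rightarrow> nat set" where
  "rotate_first_partial_block p S =
     (let j = LEAST j. partial_block p S j in block_rotate p j (block_count p S j ^ (p - 2)) ` S)"

lemma block_count_rotate_first_partial_block [simp]:
  "0 < p \<Longrightarrow> block_count p (rotate_first_partial_block p S) = block_count p S"
  by (simp add: rotate_first_partial_block_def Let_def)

lemma partial_block_rotate_first_partial_block [simp]:
  "0 < p \<Longrightarrow> partial_block p (rotate_first_partial_block p S) = partial_block p S"
  by (simp add: partial_block_def [abs_def])

lemma inj_rotate_first_partial_block: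
  assumes "0 < p"
  shows "inj (rotate_first_partial_block p)"
proof (rule injI)
  fix S T
  assume eq: "rotate_first_partial_block p S = rotate_first_partial_block p T"
  then have "block_count p S = block_count p T"
    by (metis block_count_rotate_first_partial_block[OF assms])
  then have "partial_block p S = partial_block p T"
    by (simp add: partial_block_def [abs_def])
  with eq show "S = T"
    using \<open>block_count p S = block_count p T\<close>
    by (simp add: rotate_first_partial_block_def Let_def inj_image_eq_iff inj_block_rotate[OF assms])
qed

lemma card_rotate_first_partial_block:
  "0 < p \<Longrightarrow> card (rotate_first_partial_block p S) = card S"
  by (simp add: rotate_first_partial_block_def Let_def card_image inj_on_subset[OF inj_block_rotate])

lemma rotate_first_partial_block_subset:
  "0 < p \<Longrightarrow> S \<subseteq> {0..<p * m} \<Longrightarrow> rotate_first_partial_block p S \<subseteq> {0..<p * m}"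
  by (auto simp: rotate_first_partial_block_def Let_def block_rotate_less)

lemma sum_rotate_first_partial_block_mod:
  assumes "prime p" "finite S" "partial_block p S j"
  shows "\<Sum>(rotate_first_partial_block p S) mod p = (\<Sum>S + 1) mod p"
proof -
  define j' where "j' = (LEAST j. partial_block p S j)"
  define k where "k = block_count p S j'"
  have "partial_block p S j'"
    unfolding j'_def using assms(3) by (rule LeastI)
  then have "0 < k" "k < p"
    by (simp_all add: partial_block_def k_def)
  then have "[k ^ (p - 1) = 1] (mod p)"
    by (intro fermat_theorem[OF assms(1)]) (auto dest: dvd_imp_le)
  moreover have "k ^ (p - 1) = k ^ (p - 2) * k"
    using prime_ge_2_nat[OF assms(1)] by (simp add: power_Suc2[symmetric] Suc_diff_Suc numeral_2_eq_2)
  ultimately have "[k ^ (p - 2) * k = 1] (mod p)"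
    by simp
  then have "[\<Sum>S + k ^ (p - 2) * k = \<Sum>S + 1] (mod p)"
    by (simp only: cong_add_lcancel_nat)
  moreover have "\<Sum>(rotate_first_partial_block p S) mod p = (\<Sum>S + k ^ (p - 2) * k) mod p"
    using sum_block_rotate_mod[OF prime_gt_0_nat[OF assms(1)] assms(2)]
    by (simp add: rotate_first_partial_block_def Let_def j'_def k_def)
  ultimately show ?thesis
    by (simp add: cong_def)
qed

definition subsets_sum_mod :: "nat \<Rightarrow> nat \<Rightarrow> nat \<Rightarrow> nat \<Rightarrow> nat set set" where
  "subsets_sum_mod n k q r = {S. S \<subseteq> {0..<n} \<and> card S = k \<and> \<Sum>S mod q = r}"

lemma finite_subsets_sum_mod [simp]: "finite (subsets_sum_mod n k q r)"
  by (rule finite_subset[of _ "Pow {0..<n}"]) (auto simp: subsets_sum_mod_def)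

definition partial_subsets :: "nat \<Rightarrow> nat \<Rightarrow> nat \<Rightarrow> nat \<Rightarrow> nat set set" where
  "partial_subsets p m k r = {S \<in> subsets_sum_mod (p * m) k p r. \<exists>j. partial_block p S j}"

lemma card_partial_subsets_le:
  assumes "prime p"
  shows "card (partial_subsets p m k r) \<le> card (partial_subsets p m k ((r + 1) mod p))"
proof (rule card_inj_on_le)
  have "0 < p"
    using assms by (rule prime_gt_0_nat)
  show "inj_on (rotate_first_partial_block p) (partial_subsets p m k r)"
    by (simp add: inj_on_subset[OF inj_rotate_first_partial_block[OF \<open>0 < p\<close>]])
  show "rotate_first_partial_block p ` partial_subsets p m k r \<subseteq> partial_subsets p m k ((r + 1) mod p)"
  proof clarify
    fix S
    assume "S \<in> partial_subsets p m k r"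
    then obtain j where S: "S \<subseteq> {0..<p * m}" "card S = k" "\<Sum>S mod p = r" "partial_block p S j"
      by (auto simp: partial_subsets_def subsets_sum_mod_def)
    have "finite S"
      using S(1) by (rule finite_subset) simp
    with S show "rotate_first_partial_block p S \<in> partial_subsets p m k ((r + 1) mod p)"
      using \<open>0 < p\<close> sum_rotate_first_partial_block_mod[OF assms]
      by (auto simp: partial_subsets_def subsets_sum_mod_def rotate_first_partial_block_subset
          card_rotate_first_partial_block mod_Suc_eq)
  qed
  show "finite (partial_subsets p m k ((r + 1) mod p))"
    by (simp add: partial_subsets_def)
qed

lemma cyclic_le_imp_eq:
  fixes g :: "nat \<Rightarrow> 'a::order"
  assumes step: "\<And>r. r < p \<Longrightarrow> g r \<le> g ((r + 1) mod p)" and "r < p"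
  shows "g r = g 0"
proof -
  have mono: "g (min i (p - 1)) \<le> g (min (Suc i) (p - 1))" for i
    using step[of i] by (cases "i < p - 1") (simp_all add: min_def)
  have "r \<le> p - 1"
    using \<open>r < p\<close> by simp
  then have "g 0 \<le> g r" "g r \<le> g (p - 1)"
    using lift_Suc_mono_le[of "\<lambda>i. g (min i (p - 1))", OF mono, of 0 r]
      lift_Suc_mono_le[of "\<lambda>i. g (min i (p - 1))", OF mono, of r "p - 1"]
    by (simp_all add: min_def)
  moreover have "g (p - 1) \<le> g 0"
    using step[of "p - 1"] \<open>r < p\<close> by simp
  ultimately show ?thesis
    by (metis antisym order_trans)
qed

lemma card_partial_subsets_eq:
  assumes "prime p" "r < p"
  shows "card (partial_subsets p m k r) = card (partial_subsets p m k 0)"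
  using cyclic_le_imp_eq[where g = "\<lambda>r. card (partial_subsets p m k r)"]
    card_partial_subsets_le[OF assms(1)] assms(2) by blast

section \<open>Unions of blocks\<close>

lemma div_eq_iff_mult_le_less: "0 < (p::nat) \<Longrightarrow> x div p = j \<longleftrightarrow> p * j \<le> x \<and> x < p * j + p"
  by (metis add.commute div_nat_eqI dividend_less_times_div mult_Suc_right times_div_less_eq_dividend)

lemma block_eq_atLeastLessThan: "0 < (p::nat) \<Longrightarrow> {x. x div p = j} = {p * j..<p * j + p}"
  by (auto simp: div_eq_iff_mult_le_less)

lemma finite_block [simp]: "0 < (p::nat) \<Longrightarrow> finite {x. x div p = j}"
  using block_eq_atLeastLessThan[of p j] by simp

lemma card_block [simp]: "0 < (p::nat) \<Longrightarrow> card {x. x div p = j} = p"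
  using block_eq_atLeastLessThan[of p j] by simp

lemma block_count_le:
  assumes "0 < p"
  shows "block_count p S j \<le> p"
proof -
  have "card {x \<in> S. x div p = j} \<le> card {x. x div p = j}"
    using assms by (intro card_mono) auto
  then show ?thesis
    using assms by (simp add: block_count_def)
qed

definition block_union :: "nat \<Rightarrow> nat set \<Rightarrow> nat set" where
  "block_union p J = {x. x div p \<in> J}"

lemma block_union_eq_UN: "block_union p J = (\<Union>j\<in>J. {x. x div p = j})"
  by (auto simp: block_union_def)

lemma mult_mem_block_union_iff: "0 < p \<Longrightarrow> p * j \<in> block_union p J \<longleftrightarrow> j \<in> J"
  by (simp add: block_union_def)

lemma inj_block_union:
  assumes "0 < p"
  shows "inj (block_union p)"
proof (rule injI)
  fix J J'
  assume "block_union p J = block_union p J'"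
  then show "J = J'"
    using mult_mem_block_union_iff[OF assms] by blast
qed

lemma card_block_union: "0 < p \<Longrightarrow> finite J \<Longrightarrow> card (block_union p J) = p * card J"
  unfolding block_union_eq_UN by (subst card_UN_disjoint) auto

lemma sum_block_union_cong:
  assumes "0 < p" "finite J"
  shows "[\<Sum>(block_union p J) = card J * \<Sum>{0..<p}] (mod p)"
proof -
  have block: "[\<Sum>{x. x div p = j} = \<Sum>{0..<p}] (mod p)" for j
  proof -
    have "\<Sum>{x. x div p = j} = (\<Sum>i = 0..<p. i + p * j)"
      using sum.shift_bounds_nat_ivl[of "\<lambda>x. x" 0 "p * j" p]
      by (simp add: block_eq_atLeastLessThan[OF assms(1)] add.commute)
    also have "\<dots> = \<Sum>{0..<p} + p * (p * j)"
      by (simp add: sum.distrib)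
    finally show ?thesis
      by (simp add: cong_def)
  qed
  have "\<Sum>(block_union p J) = (\<Sum>j\<in>J. \<Sum>{x. x div p = j})"
    unfolding block_union_eq_UN using assms by (subst sum.UNION_disjoint) auto
  also have "[\<dots> = (\<Sum>j\<in>J. \<Sum>{0..<p})] (mod p)"
    by (rule cong_sum) (rule block)
  finally show ?thesis
    by simp
qed

lemma block_count_block_union:
  assumes "0 < p"
  shows "block_count p (block_union p J) j = (if j \<in> J then p else 0)"
proof -
  have "{x \<in> block_union p J. x div p = j} = (if j \<in> J then {x. x div p = j} else {})"
    by (auto simp: block_union_def)
  then show ?thesis
    using assms by (simp add: block_count_def)
qed

lemma block_union_of_no_partial_block:
  assumes "0 < p" "finite S" "\<forall>j. \<not> partial_block p S j"
  shows "S = block_union p ((\<lambda>x. x div p) ` S)"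
proof
  show "S \<subseteq> block_union p ((\<lambda>x. x div p) ` S)"
    by (auto simp: block_union_def)
  show "block_union p ((\<lambda>x. x div p) ` S) \<subseteq> S"
  proof
    fix x
    assume "x \<in> block_union p ((\<lambda>x. x div p) ` S)"
    then obtain y where "y \<in> S" "y div p = x div p"
      by (auto simp: block_union_def)
    then have "0 < block_count p S (x div p)"
      using assms(2) by (auto simp: block_count_def card_gt_0_iff)
    moreover have "\<not> partial_block p S (x div p)"
      using assms(3) by blast
    ultimately have "block_count p S (x div p) = p"
      using block_count_le[OF assms(1), of S "x div p"] by (simp add: partial_block_def)
    then have "card {z \<in> S. z div p = x div p} = card {z. z div p = x div p}"
      using assms(1) by (simp add: block_count_def)
    then have "{z \<in> S. z div p = x div p} = {z. z div p = x div p}"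
      using assms(1) by (intro card_subset_eq) auto
    then show "x \<in> S"
      by blast
  qed
qed

definition saturated_subsets :: "nat \<Rightarrow> nat \<Rightarrow> nat \<Rightarrow> nat set set" where
  "saturated_subsets p m k = {S. S \<subseteq> {0..<p * m} \<and> card S = k \<and> (\<forall>j. \<not> partial_block p S j)}"

lemma saturated_subsets_eq_image:
  assumes "0 < p" "p dvd k"
  shows "saturated_subsets p m k = block_union p ` {J. J \<subseteq> {..<m} \<and> card J = k div p}"
proof (intro equalityI subsetI)
  fix S
  assume "S \<in> saturated_subsets p m k"
  then have S: "S \<subseteq> {0..<p * m}" "card S = k" "\<forall>j. \<not> partial_block p S j"
    by (simp_all add: saturated_subsets_def)
  define J where "J = (\<lambda>x. x div p) ` S"
  have "finite S"
    using S(1) by (rule finite_subset) simp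
  have "S = block_union p J"
    unfolding J_def using assms(1) \<open>finite S\<close> S(3) by (rule block_union_of_no_partial_block)
  moreover have "J \<subseteq> {..<m}"
    using S(1) assms(1) by (auto simp: J_def div_less_iff_less_mult mult.commute)
  moreover have "card J = k div p"
  proof -
    have "finite J"
      using \<open>finite S\<close> by (simp add: J_def)
    then have "k = p * card J"
      using card_block_union[OF assms(1)] \<open>S = block_union p J\<close> S(2) by simp
    then show ?thesis
      using assms(1) by simp
  qed
  ultimately show "S \<in> block_union p ` {J. J \<subseteq> {..<m} \<and> card J = k div p}"
    by blast
next
  fix S
  assume "S \<in> block_union p ` {J. J \<subseteq> {..<m} \<and> card J = k div p}"
  then obtain J where J: "J \<subseteq> {..<m}" "card J = k div p" "S = block_union p J"
    by blast
  have "finite J"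
    using J(1) by (rule finite_subset) simp
  then have "card S = k"
    using J assms card_block_union by simp
  moreover have "S \<subseteq> {0..<p * m}"
    using J assms(1) by (auto simp: block_union_def div_less_iff_less_mult mult.commute)
  moreover have "\<forall>j. \<not> partial_block p S j"
    using J(3) assms(1) by (simp add: partial_block_def block_count_block_union)
  ultimately show "S \<in> saturated_subsets p m k"
    by (simp add: saturated_subsets_def)
qed

lemma card_saturated_subsets:
  assumes "0 < p" "p dvd k"
  shows "card (saturated_subsets p m k) = m choose (k div p)"
  using assms by (simp add: saturated_subsets_eq_image card_image inj_on_subset[OF inj_block_union] n_subsets)

lemma sum_mod_saturated_subset:
  assumes "0 < p" "p dvd k" "S \<in> saturated_subsets p m k"
  shows "\<Sum>S mod p = (k div p * \<Sum>{0..<p}) mod p"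
proof -
  obtain J where "J \<subseteq> {..<m}" "card J = k div p" "S = block_union p J"
    using assms(3) unfolding saturated_subsets_eq_image[OF assms(1,2)] by auto
  moreover have "finite J"
    using \<open>J \<subseteq> {..<m}\<close> by (rule finite_subset) simp
  ultimately show ?thesis
    using sum_block_union_cong[OF assms(1)] by (simp add: cong_def)
qed

lemma card_subsets_sum_mod_blocks:
  assumes "prime p" "p dvd k" "r < p"
  shows "card (subsets_sum_mod (p * m) k p r) = card (partial_subsets p m k 0) +
    (if r = (k div p * \<Sum>{0..<p}) mod p then m choose (k div p) else 0)"
proof -
  define e where "e = (k div p * \<Sum>{0..<p}) mod p"
  define B where "B = {S \<in> saturated_subsets p m k. \<Sum>S mod p = r}"
  have "0 < p"
    using assms(1) by (rule prime_gt_0_nat)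
  have "finite (saturated_subsets p m k)"
    by (rule finite_subset[of _ "Pow {0..<p * m}"]) (auto simp: saturated_subsets_def)
  have "B = (if r = e then saturated_subsets p m k else {})"
    using sum_mod_saturated_subset[OF \<open>0 < p\<close> assms(2)] by (cases "r = e") (auto simp: B_def e_def)
  then have card_B: "card B = (if r = e then m choose (k div p) else 0)"
    using card_saturated_subsets[OF \<open>0 < p\<close> assms(2)] by simp
  have "subsets_sum_mod (p * m) k p r = partial_subsets p m k r \<union> B"
    by (auto simp: subsets_sum_mod_def partial_subsets_def B_def saturated_subsets_def)
  moreover have "card (partial_subsets p m k r \<union> B) = card (partial_subsets p m k r) + card B"
  proof (rule card_Un_disjoint)
    show "finite (partial_subsets p m k r)"
      by (simp add: partial_subsets_def)
    show "finite B"
      using \<open>finite (saturated_subsets p m k)\<close> by (simp add: B_def)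
    show "partial_subsets p m k r \<inter> B = {}"
      by (auto simp: partial_subsets_def B_def saturated_subsets_def)
  qed
  ultimately show ?thesis
    using card_partial_subsets_eq[OF assms(1,3)] card_B by (simp add: e_def)
qed

section \<open>Translation invariance\<close>

lemma Pplus_eq_card_subsets_sum_mod: "Pplus R \<mu> x = card (subsets_sum_mod R \<mu> R (x mod R))"
  by (simp add: Pplus_def subsets_sum_mod_def)

lemma Pplus_mod [simp]: "Pplus R \<mu> (x mod R) = Pplus R \<mu> x"
  by (simp add: Pplus_def)

lemma Pplus_le_Pplus_add_mult:
  assumes "0 < R"
  shows "Pplus R \<mu> s \<le> Pplus R \<mu> (s + \<mu> * t)"
proof -
  let ?shift = "\<lambda>x. (x + t) mod R"
  have inj_shift: "inj_on ?shift {0..<R}"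
  proof (rule inj_onI)
    fix x y
    assume "x \<in> {0..<R}" "y \<in> {0..<R}" "?shift x = ?shift y"
    then have "[x = y] (mod R)"
      by (simp add: cong_def[symmetric] cong_add_rcancel_nat)
    with \<open>x \<in> {0..<R}\<close> \<open>y \<in> {0..<R}\<close> show "x = y"
      by (simp add: cong_def)
  qed
  have shifted: "?shift ` S \<in> subsets_sum_mod R \<mu> R ((s + \<mu> * t) mod R)"
    if "S \<in> subsets_sum_mod R \<mu> R (s mod R)" for S
  proof -
    from that have S: "S \<subseteq> {0..<R}" "card S = \<mu>" "[\<Sum>S = s] (mod R)"
      by (simp_all add: subsets_sum_mod_def cong_def)
    have inj_S: "inj_on ?shift S"
      using inj_shift S(1) by (rule inj_on_subset)
    have "[\<Sum>(?shift ` S) = (\<Sum>x\<in>S. x + t)] (mod R)"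
      unfolding sum.reindex[OF inj_S] by (rule cong_sum) (simp add: cong_def)
    also have "(\<Sum>x\<in>S. x + t) = \<Sum>S + \<mu> * t"
      using S(2) by (simp add: sum.distrib)
    also have "[\<dots> = s + \<mu> * t] (mod R)"
      using S(3) by (rule cong_add) simp
    finally show ?thesis
      using S(2) assms by (auto simp: subsets_sum_mod_def card_image[OF inj_S] cong_def)
  qed
  show ?thesis
    unfolding Pplus_eq_card_subsets_sum_mod
  proof (rule card_inj_on_le[where f = "image ?shift"])
    show "inj_on (image ?shift) (subsets_sum_mod R \<mu> R (s mod R))"
      by (rule inj_onI) (auto simp: subsets_sum_mod_def inj_on_image_eq_iff[OF inj_shift])
  qed (use shifted in auto)
qed

lemma Pplus_add_mult:
  assumes "0 < R"
  shows "Pplus R \<mu> (s + \<mu> * t) = Pplus R \<mu> s"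
proof (rule antisym)
  have "s + \<mu> * t + \<mu> * (t * (R - 1)) = s + \<mu> * t * R"
    using assms by (cases R) (simp_all add: algebra_simps)
  then have "Pplus R \<mu> (s + \<mu> * t + \<mu> * (t * (R - 1))) = Pplus R \<mu> s"
    by (metis Pplus_mod mod_mult_self1)
  then show "Pplus R \<mu> (s + \<mu> * t) \<le> Pplus R \<mu> s"
    using Pplus_le_Pplus_add_mult[OF assms, of \<mu> "s + \<mu> * t" "t * (R - 1)"] by simp
qed (rule Pplus_le_Pplus_add_mult[OF assms])

lemma Pplus_mod_gcd:
  assumes "0 < R" "0 < \<mu>"
  shows "Pplus R \<mu> (s mod gcd R \<mu>) = Pplus R \<mu> s"
proof -
  let ?d = "gcd R \<mu>"
  obtain x y where "\<mu> * x = R * y + ?d"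
    using bezout_nat[of \<mu> R] assms(2) by (auto simp: gcd.commute)
  then have "\<mu> * (x * (s div ?d)) = R * (y * (s div ?d)) + ?d * (s div ?d)"
    by (metis add_mult_distrib mult.assoc)
  then have "s mod ?d + \<mu> * (x * (s div ?d)) = s + R * (y * (s div ?d))"
    by (simp add: add.assoc[symmetric])
  then show ?thesis
    using Pplus_add_mult[OF assms(1), of \<mu> "s mod ?d" "x * (s div ?d)"]
    by (metis Pplus_mod mod_mult_self2)
qed

lemma card_residue_class:
  assumes "d dvd n" "r < d"
  shows "card {s. s < n \<and> s mod d = r} = n div (d::nat)"
proof -
  obtain q where n: "n = d * q"
    using assms(1) by blast
  have "{s. s < n \<and> s mod d = r} = (\<lambda>i. d * i + r) ` {..<q}"
  proof (intro equalityI subsetI)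
    fix s
    assume "s \<in> {s. s < n \<and> s mod d = r}"
    then have "s = d * (s div d) + r" "s div d < q"
      using n assms(2) by (auto simp: div_less_iff_less_mult mult.commute)
    then show "s \<in> (\<lambda>i. d * i + r) ` {..<q}"
      by blast
  next
    fix s
    assume "s \<in> (\<lambda>i. d * i + r) ` {..<q}"
    then obtain i where "i < q" "s = d * i + r"
      by blast
    moreover have "d * i + r < d * Suc i"
      using assms(2) by simp
    moreover have "d * Suc i \<le> d * q"
      using \<open>i < q\<close> by (intro mult_le_mono2) simp
    ultimately show "s \<in> {s. s < n \<and> s mod d = r}"
      using n assms(2) by simp
  qed
  moreover have "inj_on (\<lambda>i. d * i + r) {..<q}"
    using assms(2) by (auto simp: inj_on_def)
  ultimately show ?thesis
    using assms(2) n by (simp add: card_image)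
qed

lemma card_subsets_sum_mod_gcd:
  assumes "0 < R" "0 < \<mu>" "r < gcd R \<mu>"
  shows "card (subsets_sum_mod R \<mu> (gcd R \<mu>) r) = R div gcd R \<mu> * Pplus R \<mu> r"
proof -
  let ?d = "gcd R \<mu>"
  let ?residues = "{s. s < R \<and> s mod ?d = r}"
  have "subsets_sum_mod R \<mu> ?d r = (\<Union>s\<in>?residues. subsets_sum_mod R \<mu> R s)"
    using assms(1) by (auto simp: subsets_sum_mod_def mod_mod_cancel)
  then have "card (subsets_sum_mod R \<mu> ?d r) = (\<Sum>s\<in>?residues. card (subsets_sum_mod R \<mu> R s))"
    by (simp add: card_UN_disjoint subsets_sum_mod_def disjoint_iff)
  also have "\<dots> = (\<Sum>s\<in>?residues. Pplus R \<mu> r)"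
  proof (rule sum.cong)
    fix s
    assume s: "s \<in> ?residues"
    then have "card (subsets_sum_mod R \<mu> R s) = Pplus R \<mu> s"
      by (simp add: Pplus_eq_card_subsets_sum_mod)
    also have "\<dots> = Pplus R \<mu> r"
      using s Pplus_mod_gcd[OF assms(1,2), of s] by simp
    finally show "card (subsets_sum_mod R \<mu> R s) = Pplus R \<mu> r" .
  qed simp
  also have "\<dots> = R div ?d * Pplus R \<mu> r"
    using assms(3) by (simp add: card_residue_class)
  finally show ?thesis .
qed

lemma sum_card_subsets_sum_mod:
  assumes "0 < q"
  shows "(\<Sum>r<q. card (subsets_sum_mod n k q r)) = n choose k"
proof -
  have "{S. S \<subseteq> {0..<n} \<and> card S = k} = (\<Union>r<q. subsets_sum_mod n k q r)"
    using assms by (auto simp: subsets_sum_mod_def)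
  moreover have "card (\<Union>r<q. subsets_sum_mod n k q r) = (\<Sum>r<q. card (subsets_sum_mod n k q r))"
    by (rule card_UN_disjoint) (auto simp: subsets_sum_mod_def)
  ultimately show ?thesis
    using n_subsets[of "{0..<n}" k] by simp
qed

lemma Pplus_gcd_prime_count:
  assumes "prime p" "p = gcd R \<mu>" "0 < R" "0 < \<mu>" "r < p"
  shows "R * Pplus R \<mu> r + (R div p choose \<mu> div p) =
    (R choose \<mu>) + (if r = (\<mu> div p * \<Sum>{0..<p}) mod p then p * (R div p choose \<mu> div p) else 0)"
proof -
  define m where "m = R div p"
  define e where "e = (\<mu> div p * \<Sum>{0..<p}) mod p"
  define W where "W = card (partial_subsets p m \<mu> 0)"
  have "0 < p" "p dvd \<mu>" "R = p * m"
    using prime_gt_0_nat[OF assms(1)] assms(2) by (simp_all add: m_def)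
  have "e < p"
    using \<open>0 < p\<close> by (simp add: e_def)
  have card_eq: "card (subsets_sum_mod R \<mu> p r') = W + (if r' = e then m choose (\<mu> div p) else 0)"
    if "r' < p" for r'
    using card_subsets_sum_mod_blocks[OF assms(1) \<open>p dvd \<mu>\<close> that, of m] \<open>R = p * m\<close>
    by (simp add: W_def e_def)
  have count: "m * Pplus R \<mu> r' = card (subsets_sum_mod R \<mu> p r')" if "r' < p" for r'
    using card_subsets_sum_mod_gcd[OF assms(3,4), of r'] that by (simp add: assms(2)[symmetric] m_def)
  have "R choose \<mu> = (\<Sum>r'<p. card (subsets_sum_mod R \<mu> p r'))"
    by (simp add: sum_card_subsets_sum_mod \<open>0 < p\<close>)
  also have "\<dots> = (\<Sum>r'<p. W + (if r' = e then m choose (\<mu> div p) else 0))"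
    by (rule sum.cong) (simp_all add: card_eq)
  also have "\<dots> = p * W + (m choose (\<mu> div p))"
    using \<open>e < p\<close> by (simp add: sum.distrib)
  finally have "R choose \<mu> = p * W + (m choose (\<mu> div p))" .
  moreover have "R * Pplus R \<mu> r = p * (W + (if r = e then m choose (\<mu> div p) else 0))"
    using count[OF assms(5)] card_eq[OF assms(5)] \<open>R = p * m\<close> by (simp add: mult.assoc)
  ultimately show ?thesis
    by (simp add: m_def[symmetric] e_def[symmetric] algebra_simps)
qed

lemma mult_sum_atLeast0LessThan_mod_prime:
  fixes p k :: nat
  assumes "prime p"
  shows "(k * \<Sum>{0..<p}) mod p = (if p = 2 then k mod 2 else 0)"
proof (cases "p = 2")
  case True
  then show ?thesis
    by (simp add: Sum_Ico_nat)
next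
  case False
  with assms have "odd p"
    by (metis prime_ge_2_nat prime_odd_nat le_neq_implies_less)
  then obtain q where "p - 1 = 2 * q"
    by (metis odd_two_times_div_two_nat diff_Suc_1)
  moreover have "\<Sum>{0..<p} = p * (p - 1) div 2"
    by (simp add: Sum_Ico_nat)
  ultimately show ?thesis
    using False by simp
qed

lemma Pplus_gcd_prime:
  assumes "prime p" "p = gcd R \<mu>" "0 < R" "0 < \<mu>" "r < p"
  shows "real (Pplus R \<mu> r) =
    (real (R - 1 choose (\<mu> - 1)) - real (R div p - 1 choose (\<mu> div p - 1))) / \<mu> +
    (if r = (if p = 2 then \<mu> div p mod 2 else 0)
     then real (R div p - 1 choose (\<mu> div p - 1)) / real (\<mu> div p) else 0)"
proof -
  define m where "m = R div p"
  define k where "k = \<mu> div p"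
  define e where "e = (if p = 2 then k mod 2 else 0)"
  define c where "c = real (m - 1 choose (k - 1))"
  have "R = p * m" "\<mu> = p * k"
    using assms(2) by (simp_all add: m_def k_def)
  then have "0 < m" "0 < k" "0 < p"
    using assms(3,4) by simp_all
  have "real R * real (Pplus R \<mu> r) + real (m choose k) =
      real (R choose \<mu>) + (if r = e then real p * real (m choose k) else 0)"
    using arg_cong[OF Pplus_gcd_prime_count[OF assms], of real] assms(1)
    by (simp add: mult_sum_atLeast0LessThan_mod_prime m_def k_def e_def)
  then have "real (Pplus R \<mu> r) =
      real (R choose \<mu>) / R - real (m choose k) / R + (if r = e then real p * real (m choose k) / R else 0)"
    using assms(3) by (simp add: field_simps)
  moreover have "real (R choose \<mu>) / R = real (R - 1 choose (\<mu> - 1)) / \<mu>"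
    using arg_cong[OF times_binomial_minus1_eq[OF assms(4), of R], of real] assms(3,4)
    by (simp add: field_simps)
  moreover have "real k * real (m choose k) = real m * c"
    using arg_cong[OF times_binomial_minus1_eq[OF \<open>0 < k\<close>, of m], of real] by (simp add: c_def)
  then have "real (m choose k) / R = c / \<mu>" "real p * real (m choose k) / R = c / k"
    using \<open>R = p * m\<close> \<open>\<mu> = p * k\<close> \<open>0 < m\<close> \<open>0 < k\<close> \<open>0 < p\<close> by (simp_all add: field_simps)
  ultimately have "real (Pplus R \<mu> r) = (real (R - 1 choose (\<mu> - 1)) - c) / \<mu> + (if r = e then c / k else 0)"
    by (simp add: diff_divide_distrib)
  then show ?thesis
    by (simp add: m_def k_def e_def c_def)
qed

lemma Pplus_eq_if_gcd_dvd:
  assumes "prime (gcd R \<mu>)" "0 < R" "0 < \<mu>"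
  shows "Pplus R \<mu> x = (if gcd R \<mu> dvd x then Pplus R \<mu> 0 else Pplus R \<mu> 1)"
proof (cases "gcd R \<mu> dvd x")
  case True
  then show ?thesis
    using Pplus_mod_gcd[OF assms(2,3), of x] by (simp only: dvd_eq_mod_eq_0 if_True) simp
next
  case False
  let ?p = "gcd R \<mu>"
  have "1 < ?p"
    using assms(1) by (rule prime_gt_1_nat)
  have "x mod ?p < ?p"
    using assms(3) by simp
  have "0 < x mod ?p"
    using False by (simp add: dvd_eq_mod_eq_0 gr0I)
  have "Pplus R \<mu> (x mod ?p) = Pplus R \<mu> 1"
  proof (cases "?p = 2")
    case True
    then have "x mod ?p = 1"
      using \<open>0 < x mod ?p\<close> \<open>x mod ?p < ?p\<close> by linarith
    then show ?thesis
      by simp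
  next
    case False
    then show ?thesis
      using Pplus_gcd_prime[OF assms(1) refl assms(2,3) \<open>x mod ?p < ?p\<close>]
        Pplus_gcd_prime[OF assms(1) refl assms(2,3) \<open>1 < ?p\<close>] \<open>0 < x mod ?p\<close>
      by simp
  qed
  then show ?thesis
    using False Pplus_mod_gcd[OF assms(2,3), of x] by (simp only: if_False)
qed

corollary Pplus_gcd_odd_prime:
  assumes "prime p" "p \<noteq> 2" "gcd R \<mu> = p" "0 < R" "0 < \<mu>"
  defines "c \<equiv> real (R div p - 1 choose (\<mu> div p - 1))"
  shows "real \<mu> * real (Pplus R \<mu> 0) = real (R - 1 choose (\<mu> - 1)) + (real p - 1) * c"
    and "real \<mu> * real (Pplus R \<mu> 1) = real (R - 1 choose (\<mu> - 1)) - c"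
proof -
  note formula = Pplus_gcd_prime[OF assms(1) assms(3)[symmetric] assms(4,5), folded c_def]
  have "1 < p"
    using assms(1) by (rule prime_gt_1_nat)
  have "\<mu> = p * (\<mu> div p)"
    using assms(3) by (metis dvd_mult_div_cancel gcd_dvd2)
  then have "0 < \<mu> div p" "real \<mu> = real p * real (\<mu> div p)"
    using assms(5) by (metis mult_0_right neq0_conv, metis of_nat_mult)
  then show "real \<mu> * real (Pplus R \<mu> 0) = real (R - 1 choose (\<mu> - 1)) + (real p - 1) * c"
    using formula[of 0] \<open>1 < p\<close> assms(2) by (simp add: field_simps)
  show "real \<mu> * real (Pplus R \<mu> 1) = real (R - 1 choose (\<mu> - 1)) - c"
    using formula[of 1] \<open>1 < p\<close> assms(2,5) by simp
qed

corollary Pplus_gcd_two: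
  assumes "gcd R \<mu> = 2" "0 < R" "0 < \<mu>"
  defines "c \<equiv> real (R div 2 - 1 choose (\<mu> div 2 - 1))"
  shows "real \<mu> * real (Pplus R \<mu> 0) = real (R - 1 choose (\<mu> - 1)) + (- 1) ^ (\<mu> div 2) * c"
    and "real \<mu> * real (Pplus R \<mu> 1) = real (R - 1 choose (\<mu> - 1)) - (- 1) ^ (\<mu> div 2) * c"
proof -
  note formula = Pplus_gcd_prime[OF two_is_prime_nat assms(1)[symmetric] assms(2,3), folded c_def]
  define k where "k = \<mu> div 2"
  have "\<mu> = 2 * k"
    using assms(1) unfolding k_def by (metis dvd_mult_div_cancel gcd_dvd2)
  then have "0 < k" "real \<mu> = 2 * real k"
    using assms(3) by simp_all
  moreover have "(- 1) ^ k = (if k mod 2 = 0 then 1 else - 1 :: real)"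
    by (simp add: minus_one_power_iff even_iff_mod_2_eq_zero)
  ultimately show "real \<mu> * real (Pplus R \<mu> 0) = real (R - 1 choose (\<mu> - 1)) + (- 1) ^ (\<mu> div 2) * c"
    "real \<mu> * real (Pplus R \<mu> 1) = real (R - 1 choose (\<mu> - 1)) - (- 1) ^ (\<mu> div 2) * c"
    using formula[of 0] formula[of 1] by (simp_all add: k_def[symmetric] field_simps split: if_splits)
qed

corollary Pplus_odd_prime_size:
  assumes "prime p" "p \<noteq> 2" "p dvd R" "0 < R"
  shows "real (Pplus R p 0) = (real (R - 1 choose (p - 1)) - 1) / p + 1"
    and "real (Pplus R p 1) = (real (R - 1 choose (p - 1)) - 1) / p"
proof -
  have "gcd R p = p" "0 < p"
    using assms(1,3) by (simp_all add: gcd_nat.absorb2 prime_gt_0_nat)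
  then show "real (Pplus R p 0) = (real (R - 1 choose (p - 1)) - 1) / p + 1"
    "real (Pplus R p 1) = (real (R - 1 choose (p - 1)) - 1) / p"
    using Pplus_gcd_odd_prime[OF assms(1,2) \<open>gcd R p = p\<close> assms(4) \<open>0 < p\<close>]
    by (simp_all add: field_simps)
qed

corollary Pplus_size_4:
  assumes "R mod 4 = 2"
  shows "real (Pplus R 4 0) = (real (R - 1 choose 3) + (real R - 2) / 2) / 4"
    and "real (Pplus R 4 1) = (real (R - 1 choose 3) - (real R - 2) / 2) / 4"
proof -
  have "gcd R 4 = 2" "0 < R" "2 dvd R" "1 \<le> R div 2"
    using assms by (simp add: gcd_red_nat[of R 4], presburger+)
  then show "real (Pplus R 4 0) = (real (R - 1 choose 3) + (real R - 2) / 2) / 4"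
    "real (Pplus R 4 1) = (real (R - 1 choose 3) - (real R - 2) / 2) / 4"
    using Pplus_gcd_two[of R 4] by (simp_all add: of_nat_diff real_of_nat_div field_simps)
qed

corollary Pplus_size_6_even:
  assumes "R mod 6 = 2 \<or> R mod 6 = 4"
  shows "real (Pplus R 6 0) = (real (R - 1 choose 5) - real (R div 2 - 1 choose 2)) / 6"
    and "real (Pplus R 6 1) = (real (R - 1 choose 5) + real (R div 2 - 1 choose 2)) / 6"
proof -
  have "0 < R"
    using assms by auto
  have "gcd R 6 = 2"
    using assms by (elim disjE) (simp_all add: gcd_red_nat[of R 6] gcd_red_nat[of 6 4])
  then show "real (Pplus R 6 0) = (real (R - 1 choose 5) - real (R div 2 - 1 choose 2)) / 6"
    "real (Pplus R 6 1) = (real (R - 1 choose 5) + real (R div 2 - 1 choose 2)) / 6"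
    using Pplus_gcd_two[of R 6] \<open>0 < R\<close> by (simp_all add: field_simps)
qed

corollary Pplus_size_6_odd:
  assumes "R mod 6 = 3"
  shows "real (Pplus R 6 0) = (real (R - 1 choose 5) / 2 + (real R - 3) / 3) / 3"
    and "real (Pplus R 6 1) = (real (R - 1 choose 5) - (real R - 3) / 3) / 6"
proof -
  have "gcd R 6 = 3" "0 < R" "3 dvd R" "1 \<le> R div 3"
    using assms by (simp add: gcd_red_nat[of R 6], presburger+)
  then show "real (Pplus R 6 0) = (real (R - 1 choose 5) / 2 + (real R - 3) / 3) / 3"
    "real (Pplus R 6 1) = (real (R - 1 choose 5) - (real R - 3) / 3) / 6"
    using Pplus_gcd_odd_prime[of 3 R 6] by (simp_all add: of_nat_diff real_of_nat_div field_simps)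
qed

corollary Pplus_size_8:
  assumes "R mod 4 = 2"
  shows "real (Pplus R 8 0) = (real (R - 1 choose 7) + real (R div 2 - 1 choose 3)) / 8"
    and "real (Pplus R 8 1) = (real (R - 1 choose 7) - real (R div 2 - 1 choose 3)) / 8"
proof -
  have "R mod 8 = 2 \<or> R mod 8 = 6" "0 < R"
    using assms by presburger+
  then have "gcd R 8 = 2"
    by (elim disjE) (simp_all add: gcd_red_nat[of R 8] gcd_red_nat[of 8 6])
  with \<open>0 < R\<close> show "real (Pplus R 8 0) = (real (R - 1 choose 7) + real (R div 2 - 1 choose 3)) / 8"
    "real (Pplus R 8 1) = (real (R - 1 choose 7) - real (R div 2 - 1 choose 3)) / 8"
    using Pplus_gcd_two[of R 8] by (simp_all add: field_simps)
qed

corollary Pplus_size_9: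
  assumes "R mod 9 = 3 \<or> R mod 9 = 6"
  shows "real (Pplus R 9 0) = (real (R - 1 choose 8) + 2 * real (R div 3 - 1 choose 2)) / 9"
    and "real (Pplus R 9 1) = (real (R - 1 choose 8) - real (R div 3 - 1 choose 2)) / 9"
proof -
  have "0 < R"
    using assms by auto
  have "gcd R 9 = 3"
    using assms by (elim disjE) (simp_all add: gcd_red_nat[of R 9] gcd_red_nat[of 9 6])
  have "prime (3::nat)"
    by simp
  have "9 * real (Pplus R 9 0) = real (R - 1 choose 8) + 2 * real (R div 3 - 1 choose 2)"
    "9 * real (Pplus R 9 1) = real (R - 1 choose 8) - real (R div 3 - 1 choose 2)"
    using Pplus_gcd_odd_prime[OF \<open>prime 3\<close> _ \<open>gcd R 9 = 3\<close> \<open>0 < R\<close>] by (simp_all add: numeral_2_eq_2)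
  then show "real (Pplus R 9 0) = (real (R - 1 choose 8) + 2 * real (R div 3 - 1 choose 2)) / 9"
    "real (Pplus R 9 1) = (real (R - 1 choose 8) - real (R div 3 - 1 choose 2)) / 9"
    by (simp_all add: field_simps)
qed

theorem theorem4p11:
  fixes R \<mu> :: nat
  defines "D \<equiv> gcd R \<mu>"
  assumes "0 < \<mu>" and "\<mu> < R"
    and "D \<ge> 2" and "prime D"
    and "Gorbits R \<mu> = {{x. x < R \<and> D dvd x}, {x. x < R \<and> \<not> D dvd x}}"
  shows
   "(\<mu> = 3 \<and> 3 dvd R \<and> R \<ge> 6 \<longrightarrow>
       real (Pplus R 3 0) = (real (R - 1 choose 2) - 1) / 3 + 1 \<and>
       real (Pplus R 3 1) = (real (R - 1 choose 2) - 1) / 3)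
  \<and> (\<mu> = 4 \<and> R mod 4 = 2 \<and> R \<ge> 6 \<longrightarrow>
       real (Pplus R 4 0) = (real (R - 1 choose 3) + (real R - 2) / 2) / 4 \<and>
       real (Pplus R 4 1) = (real (R - 1 choose 3) - (real R - 2) / 2) / 4)
  \<and> (\<mu> = 5 \<and> 5 dvd R \<and> R \<ge> 10 \<longrightarrow>
       real (Pplus R 5 0) = (real (R - 1 choose 4) - 1) / 5 + 1 \<and>
       real (Pplus R 5 1) = (real (R - 1 choose 4) - 1) / 5)
  \<and> (\<mu> = 6 \<and> ((R mod 6 = 2 \<and> R \<ge> 8) \<or> (R mod 6 = 4 \<and> R \<ge> 10)) \<longrightarrow>
       real (Pplus R 6 0) = (real (R - 1 choose 5) - real (R div 2 - 1 choose 2)) / 6 \<and>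
       real (Pplus R 6 1) = (real (R - 1 choose 5) + real (R div 2 - 1 choose 2)) / 6)
  \<and> (\<mu> = 6 \<and> R mod 6 = 3 \<and> R \<ge> 9 \<longrightarrow>
       real (Pplus R 6 0) = (real (R - 1 choose 5) / 2 + (real R - 3) / 3) / 3 \<and>
       real (Pplus R 6 1) = (real (R - 1 choose 5) - (real R - 3) / 3) / 6)
  \<and> (\<mu> = 7 \<and> 7 dvd R \<and> R \<ge> 14 \<longrightarrow>
       real (Pplus R 7 0) = (real (R - 1 choose 6) - 1) / 7 + 1 \<and>
       real (Pplus R 7 1) = (real (R - 1 choose 6) - 1) / 7)
  \<and> (\<mu> = 8 \<and> R mod 4 = 2 \<and> R \<ge> 10 \<longrightarrow>
       real (Pplus R 8 0) = (real (R - 1 choose 7) + real (R div 2 - 1 choose 3)) / 8 \<and>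
       real (Pplus R 8 1) = (real (R - 1 choose 7) - real (R div 2 - 1 choose 3)) / 8)
  \<and> (\<mu> = 9 \<and> ((R mod 9 = 3 \<and> R \<ge> 12) \<or> (R mod 9 = 6 \<and> R \<ge> 15)) \<longrightarrow>
       real (Pplus R 9 0) = (real (R - 1 choose 8) + 2 * real (R div 3 - 1 choose 2)) / 9 \<and>
       real (Pplus R 9 1) = (real (R - 1 choose 8) - real (R div 3 - 1 choose 2)) / 9)
  \<and> (\<forall>x < R. Pplus R \<mu> x = (if D dvd x then Pplus R \<mu> 0 else Pplus R \<mu> 1))"
proof -
  have "0 < R"
    using \<open>0 < \<mu>\<close> \<open>\<mu> < R\<close> by simp
  let "?c3 \<and> ?c4 \<and> ?c5 \<and> ?c6 \<and> ?c6' \<and> ?c7 \<and> ?c8 \<and> ?c9 \<and> ?residues" = ?thesis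
  have ?c3
    using Pplus_odd_prime_size[of 3 R] by simp
  moreover have ?c4
    using Pplus_size_4[of R] by simp
  moreover have ?c5
    using Pplus_odd_prime_size[of 5 R] by simp
  moreover have ?c6
    using Pplus_size_6_even[of R] by auto
  moreover have ?c6'
    using Pplus_size_6_odd[of R] by simp
  moreover have ?c7
    using Pplus_odd_prime_size[of 7 R] by simp
  moreover have ?c8
    using Pplus_size_8[of R] by simp
  moreover have ?c9
    using Pplus_size_9[of R] by auto
  moreover have ?residues
    using Pplus_eq_if_gcd_dvd[OF \<open>prime D\<close>[unfolded D_def] \<open>0 < R\<close> \<open>0 < \<mu>\<close>] by (simp add: D_def)
  ultimately show ?thesis
    by (intro conjI)
qed

end
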